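(* Let $T=\langle 1,b,c\rangle$ with $1<b<c$ and $\gcd(b,c)=1$. Then $\mathcal H_1=\mathrm L(c,1,b,0)$ is an L-shape related to $T$ with $(\delta,\theta)=(1,0)$, and the L-shape $$\mathcal H_2=\begin{cases}\mathrm L(b,2,2b-c,1)&\text{if }c<2b,\\ \mathrm L(b,1+\lfloor c/b\rfloor,b-r,1)&\text{if }c>2b,\text{ where }c=\lfloor c/b\rfloor b+r,\ 0\le r<b,\end{cases}$$ is related to $T$ with $(\delta,\theta)=(0,1)$.
   Context: $T=\langle a,b,c\rangle=\{xa+yb+zc:x,y,z\in\mathbb N\}$ (here $a=1$). For $(i,j)\in\mathbb N^2$ let $[\![i,j]\!]=[i,i+1)\times[j,j+1)\subset\mathbb R^2$. For integers $0\le w<l$, $0\le y<h$, the L-shape $\mathrm L(l,h,w,y)$ is the set of unit squares $[\![i,j]\!]$ with $0\le i<l$, $0\le j<h$, excluding those with $i\ge l-w$ and $j\ge h-y$ (it has $lh-wy$ squares). An L-shape $\mathcal H$ is related to $T$ if it consists of exactly $c$ squares, every residue class modulo $c$ equals $ia+jb \bmod c$ for exactly one $[\![i,j]\!]\in\mathcal H$, and for each $[\![i,j]\!]\in\mathcal H$, $ia+jb=\min\{sa+tb:(s,t)\in\mathbb N^2,\ sa+tb\equiv ia+jb \pmod c\}$. For an L-shape $\mathrm L(l,h,w,y)$, $\delta=(la-yb)/c$ and $\theta=(hb-wa)/c$. *)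

theory Defs
  imports Complex_Main "HOL-Number_Theory.Cong"
begin

text \<open>The unit square [[i,j]] is represented by the pair (i,j) of naturals.
  L(l,h,w,y) is the set of squares (i,j) with i<l, j<h, excluding those with
  i >= l-w and j >= h-y.\<close>
definition Lshape :: "nat \<Rightarrow> nat \<Rightarrow> nat \<Rightarrow> nat \<Rightarrow> (nat \<times> nat) set" where
  "Lshape l h w y = {(i, j). i < l \<and> j < h \<and> \<not> (i \<ge> l - w \<and> j \<ge> h - y)}"

definition related_Lshape :: "nat \<Rightarrow> nat \<Rightarrow> nat \<Rightarrow> nat \<Rightarrow> nat \<Rightarrow> nat \<Rightarrow> nat \<Rightarrow> bool" where
  "related_Lshape a b c l h w y \<longleftrightarrow>
     w < l \<and> y < h \<and>
     card (Lshape l h w y) = c \<and>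
     (\<forall>r < c. \<exists>!p. p \<in> Lshape l h w y \<and> (fst p * a + snd p * b) mod c = r) \<and>
     (\<forall>(i, j) \<in> Lshape l h w y.
        i * a + j * b =
          (LEAST v. \<exists>s t. v = s * a + t * b \<and> [s * a + t * b = i * a + j * b] (mod c)))"

definition Ldelta :: "nat \<Rightarrow> nat \<Rightarrow> nat \<Rightarrow> nat \<Rightarrow> nat \<Rightarrow> real" where
  "Ldelta a b c l y = (real l * real a - real y * real b) / real c"

definition Ltheta :: "nat \<Rightarrow> nat \<Rightarrow> nat \<Rightarrow> nat \<Rightarrow> nat \<Rightarrow> real" where
  "Ltheta a b c h w = (real h * real b - real w * real a) / real c"

end

theory Submission
  imports Defs
begin

text \<open>With a = 1 it suffices that (i, j) \<mapsto> i + jb maps the L-shape bijectively onto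
  {0, ..., c - 1}: each value is then the least element of its residue class mod c, since
  anything congruent to it is at least its remainder mod c. Writing
  c = qb + r, the shape H2 consists of the rows 0, ..., q - 1 in full and the first r squares
  of row q, i.e. exactly of the base-b digit pairs (v mod b, v div b) of the numbers v < c;
  the case c < 2b is q = 1, and coprimality gives r > 0.\<close>

lemma related_Lshape_if_bij_betw:
  assumes "w < l" "y < h"
    and bij: "bij_betw (\<lambda>(i, j). i * a + j * b) (Lshape l h w y) {..<c}"
  shows "related_Lshape a b c l h w y"
proof -
  define f where "f = (\<lambda>(i, j). i * a + j * b)"
  let ?S = "Lshape l h w y"
  have inj: "inj_on f ?S" and img: "f ` ?S = {..<c}"
    using bij by (auto simp: bij_betw_def f_def)
  have f_less: "f p < c" if "p \<in> ?S" for p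
    using that img by blast
  have unique: "\<exists>!p. p \<in> ?S \<and> f p mod c = r" if "r < c" for r
  proof -
    obtain p where p: "p \<in> ?S" "f p = r"
      using \<open>r < c\<close> img by (metis imageE lessThan_iff)
    show ?thesis
    proof (rule ex1I[of _ p])
      show "p' = p" if "p' \<in> ?S \<and> f p' mod c = r" for p'
      proof -
        have "f p' = f p" using that p f_less[of p'] by auto
        then show ?thesis using inj that p(1) by (blast dest: inj_onD)
      qed
    qed (use p \<open>r < c\<close> in simp)
  qed
  have least: "f p = (LEAST v. \<exists>s t. v = s * a + t * b \<and> [s * a + t * b = f p] (mod c))"
    if "p \<in> ?S" for p
  proof (rule Least_equality[symmetric])
    obtain i j where "p = (i, j)" by fastforce
    then show "\<exists>s t. f p = s * a + t * b \<and> [s * a + t * b = f p] (mod c)"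
      by (intro exI[of _ i] exI[of _ j]) (simp add: f_def)
    show "f p \<le> v" if "\<exists>s t. v = s * a + t * b \<and> [s * a + t * b = f p] (mod c)" for v
    proof -
      have "v mod c = f p"
        using that f_less[OF \<open>p \<in> ?S\<close>] by (auto simp: cong_def)
      then show ?thesis by (metis mod_less_eq_dividend)
    qed
  qed
  have "fst p * a + snd p * b = f p" for p
    by (simp add: f_def split: prod.splits)
  then show ?thesis
    unfolding related_Lshape_def
    using assms(1,2) bij_betw_same_card[OF bij] unique least by auto
qed

lemma bij_betw_base_digits:
  fixes b c :: nat
  assumes "0 < b"
  shows "bij_betw (\<lambda>(i, j). i * 1 + j * b) {(i, j). i < b \<and> i + j * b < c} {..<c}"
proof (rule bij_betw_byWitness[where f' = "\<lambda>v. (v mod b, v div b)"])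
  show "\<forall>v\<in>{..<c}. (\<lambda>(i, j). i * 1 + j * b) (v mod b, v div b) = v"
    by simp
qed (use assms in auto)

lemma add_mult_less_iff_lex:
  fixes i j b q r :: nat
  assumes "i < b" "r < b"
  shows "i + j * b < r + q * b \<longleftrightarrow> j < q \<or> (j = q \<and> i < r)"
proof (cases j q rule: linorder_cases)
  case less
  then have "(j + 1) * b \<le> q * b" by (intro mult_le_mono1) simp
  then show ?thesis using less assms by simp
next
  case greater
  then have "(q + 1) * b \<le> j * b" by (intro mult_le_mono1) simp
  then show ?thesis using greater assms by simp
qed simp

lemma Lshape_row_eq: "Lshape l 1 w 0 = {..<l} \<times> {0}"
  by (auto simp: Lshape_def)

lemma Lshape_base_digits_eq:
  fixes b c :: nat
  assumes "0 < b"
  shows "Lshape b (1 + c div b) (b - c mod b) 1 = {(i, j). i < b \<and> i + j * b < c}"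
proof -
  have "i + j * b < c \<longleftrightarrow> j < c div b \<or> (j = c div b \<and> i < c mod b)" if "i < b" for i j
    using add_mult_less_iff_lex[OF that mod_less_divisor[OF assms, of c], of j "c div b"]
    by (simp add: mod_div_mult_eq)
  then show ?thesis
    using assms by (auto simp: Lshape_def less_Suc_eq_le)
qed

lemma related_Lshape_row:
  assumes "b < c"
  shows "related_Lshape 1 b c c 1 b 0"
proof (rule related_Lshape_if_bij_betw)
  show "bij_betw (\<lambda>(i, j). i * 1 + j * b) (Lshape c 1 b 0) {..<c}"
    unfolding Lshape_row_eq by (rule bij_betw_byWitness[where f' = "\<lambda>v. (v, 0)"]) auto
qed (use assms in auto)

lemma related_Lshape_base_digits:
  fixes b c :: nat
  assumes "0 < b" "b \<le> c" "\<not> b dvd c"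
  shows "related_Lshape 1 b c b (1 + c div b) (b - c mod b) 1"
proof (rule related_Lshape_if_bij_betw)
  show "b - c mod b < b" "1 < 1 + c div b"
    using assms by (simp_all add: dvd_eq_mod_eq_0 div_greater_zero_iff)
  show "bij_betw (\<lambda>(i, j). i * 1 + j * b) (Lshape b (1 + c div b) (b - c mod b) 1) {..<c}"
    unfolding Lshape_base_digits_eq[OF assms(1)] by (rule bij_betw_base_digits[OF assms(1)])
qed

lemma Ltheta_base_digits:
  fixes b c :: nat
  assumes "0 < b" "0 < c"
  shows "Ltheta 1 b c (1 + c div b) (b - c mod b) = 1"
proof -
  have "real (b - c mod b) = real b - real (c mod b)"
    using assms(1) by (simp add: of_nat_diff less_imp_le)
  moreover have "real c = real (c div b) * real b + real (c mod b)"
    by (metis div_mult_mod_eq of_nat_add of_nat_mult)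
  ultimately show ?thesis
    using assms(2) by (simp add: Ltheta_def algebra_simps)
qed

lemma base_digits_of_less_double:
  fixes b c :: nat
  assumes "b < c" "c < 2 * b"
  shows "c div b = 1" "b - c mod b = 2 * b - c"
proof -
  show "c div b = 1" using assms by (simp add: div_nat_eqI)
  then show "b - c mod b = 2 * b - c"
    using div_mult_mod_eq[of c b] by simp
qed

theorem lemma12:
  fixes b c :: nat
  assumes "1 < b" and "b < c" and "coprime b c"
  shows "related_Lshape 1 b c c 1 b 0 \<and> Ldelta 1 b c c 0 = 1 \<and> Ltheta 1 b c 1 b = 0
    \<and> (c < 2 * b \<longrightarrow>
         related_Lshape 1 b c b 2 (2 * b - c) 1 \<and>
         Ldelta 1 b c b 1 = 0 \<and> Ltheta 1 b c 2 (2 * b - c) = 1)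
    \<and> (2 * b < c \<longrightarrow>
         related_Lshape 1 b c b (1 + c div b) (b - c mod b) 1 \<and>
         Ldelta 1 b c b 1 = 0 \<and> Ltheta 1 b c (1 + c div b) (b - c mod b) = 1)"
proof -
  have "\<not> b dvd c"
    using assms by (metis coprime_absorb_left nat_dvd_1_iff_1 less_irrefl)
  then have related_digits: "related_Lshape 1 b c b (1 + c div b) (b - c mod b) 1"
    using assms by (intro related_Lshape_base_digits) auto
  have theta_digits: "Ltheta 1 b c (1 + c div b) (b - c mod b) = 1"
    using assms by (intro Ltheta_base_digits) auto
  have "c div b = 1" "b - c mod b = 2 * b - c" if "c < 2 * b"
    using base_digits_of_less_double assms(2) that by simp_all
  then have "related_Lshape 1 b c b 2 (2 * b - c) 1 \<and> Ltheta 1 b c 2 (2 * b - c) = 1"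
    if "c < 2 * b"
    using related_digits theta_digits that by (simp add: numeral_2_eq_2)
  moreover have "Ldelta 1 b c c 0 = 1" "Ltheta 1 b c 1 b = 0" "Ldelta 1 b c b 1 = 0"
    using assms by (simp_all add: Ldelta_def Ltheta_def)
  ultimately show ?thesis
    using related_Lshape_row[OF assms(2)] related_digits theta_digits by (intro conjI impI) simp_all
qed

end
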